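(* Let $(Q,\rightarrow)$ be a finite transition system, $\mathscr{R}$ a preorder on $Q$ and $\mathscr{P}\subseteq\mathscr{R}$ an equivalence relation with a representative $E.\mathrm{rep}\in E$ fixed for each block $E$ of $\mathscr{P}$. Let $E$ be a block of $\mathscr{P}$ and $B$ a block of $\mathscr{R}$ such that $E\rightarrow B$ and $\mathrm{RelCount}_{(\mathscr{P},\mathscr{R})}(E,B)=0$ (a splitter transition of type 1). Let $P'=\mathrm{Split}(P_{\mathscr{P}},\rightarrow^{-1}(\mathscr{R}(B)))$. Then the equivalence relation $\mathscr{P}_{P'}$ is strictly included in $\mathscr{P}$ and contains every $\mathscr{R}$-block-stable equivalence relation included in $\mathscr{P}$.
   Context: A preorder is a reflexive transitive relation; its blocks are $[q]_{\mathscr{R}}=\{q'\mid q\,\mathscr{R}\,q'\wedge q'\,\mathscr{R}\,q\}$. $\mathscr{R}(X)=\{q'\mid\exists q\in X.\ q\,\mathscr{R}\,q'\}$, $\rightarrow^{-1}(Y)=\{q\mid\exists y\in Y.\ q\rightarrow y\}$. For sets $X,Y$ write $X\rightarrow Y$ if some $x\in X,y\in Y$ have $x\rightarrow y$, and $X\,\mathscr{R}\,Y$ if $(X\times Y)\cap\mathscr{R}\ne\emptyset$. $P_{\mathscr{P}}$ is the partition of $Q$ into blocks of $\mathscr{P}$, and $\mathscr{P}_P=\bigcup_{E\in P}E\times E$ for a partition $P$. $\mathrm{RelCount}_{(\mathscr{P},\mathscr{R})}(E,B)=|\{E'\in P_{\mathscr{P}}\mid E.\mathrm{rep}\rightarrow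 E'\wedge B\,\mathscr{R}\,E'\}|$. $\mathrm{Split}(P,M)$ is the partition obtained from $P$ by replacing each block $E$ with $E\cap M\neq\emptyset$ and $E\not\subseteq M$ by the two blocks $E\cap M$ and $E\setminus M$. An equivalence relation $\mathscr{P}''\subseteq\mathscr{R}$ is $\mathscr{R}$-block-stable if for all $b,d,d'$ with $d\,\mathscr{P}''\,d'$: $d\in\rightarrow^{-1}(\mathscr{R}(b))\iff d'\in\rightarrow^{-1}(\mathscr{R}(b))$. *)

theory Defs
  imports Main
begin

definition preorder_on :: "'a set \<Rightarrow> ('a \<times> 'a) set \<Rightarrow> bool" where
  "preorder_on Q R \<longleftrightarrow> refl_on Q R \<and> trans R"

definition rblock :: "('a \<times> 'a) set \<Rightarrow> 'a \<Rightarrow> 'a set" where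
  "rblock R q = {q'. (q, q') \<in> R \<and> (q', q) \<in> R}"

definition preimg :: "('a \<times> 'a) set \<Rightarrow> 'a set \<Rightarrow> 'a set" where
  "preimg T Y = {q. \<exists>y\<in>Y. (q, y) \<in> T}"

definition set_trans :: "('a \<times> 'a) set \<Rightarrow> 'a set \<Rightarrow> 'a set \<Rightarrow> bool" where
  "set_trans T X Y \<longleftrightarrow> (\<exists>x\<in>X. \<exists>y\<in>Y. (x, y) \<in> T)"

definition set_rel :: "('a \<times> 'a) set \<Rightarrow> 'a set \<Rightarrow> 'a set \<Rightarrow> bool" where
  "set_rel R X Y \<longleftrightarrow> (X \<times> Y) \<inter> R \<noteq> {}"

definition RelCount ::
  "'a set \<Rightarrow> ('a \<times> 'a) set \<Rightarrow> ('a set \<Rightarrow> 'a) \<Rightarrow> ('a \<times> 'a) set \<Rightarrow> ('a \<times> 'a) set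
     \<Rightarrow> 'a set \<Rightarrow> 'a set \<Rightarrow> nat" where
  "RelCount Q T rep P R E B =
     card {E' \<in> Q // P. set_trans T {rep E} E' \<and> set_rel R B E'}"

definition Split :: "'a set set \<Rightarrow> 'a set \<Rightarrow> 'a set set" where
  "Split PP M =
     {E \<in> PP. \<not> (E \<inter> M \<noteq> {} \<and> \<not> E \<subseteq> M)} \<union>
     (\<Union>E \<in> {E \<in> PP. E \<inter> M \<noteq> {} \<and> \<not> E \<subseteq> M}. {E \<inter> M, E - M})"

definition rel_of_partition :: "'a set set \<Rightarrow> ('a \<times> 'a) set" where
  "rel_of_partition PP = (\<Union>E \<in> PP. E \<times> E)"

definition block_stable :: "('a \<times> 'a) set \<Rightarrow> ('a \<times> 'a) set \<Rightarrow> ('a \<times> 'a) set \<Rightarrow> bool" where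
  "block_stable T R P'' \<longleftrightarrow>
     (\<forall>b d d'. (d, d') \<in> P'' \<longrightarrow>
        (d \<in> preimg T (R `` {b}) \<longleftrightarrow> d' \<in> preimg T (R `` {b})))"

end

theory Submission
  imports Defs
begin

text \<open>Splitting the blocks of a partition by a set M keeps exactly those pairs of P-related
  states that M does not separate. A type 1 splitter has the representative of E outside M =
  pre(R(B)) (otherwise some block reached from it would be R-above B, making the count positive),
  while the source of the transition E \<rightarrow> B lies inside M; so E is really split. A block-stable
  relation never separates two states by a set pre(R(b)), hence never by their union M.\<close>

lemma rel_of_partition_Split_iff:
  assumes "equiv Q P"
  shows "(x, y) \<in> rel_of_partition (Split (Q // P) M) \<longleftrightarrow> (x, y) \<in> P \<and> (x \<in> M \<longleftrightarrow> y \<in> M)"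
proof
  assume "(x, y) \<in> rel_of_partition (Split (Q // P) M)"
  then obtain X where X: "X \<in> Split (Q // P) M" "x \<in> X" "y \<in> X"
    unfolding rel_of_partition_def by auto
  then obtain C where C: "C \<in> Q // P" "X \<subseteq> C"
    "X = C \<or> X = C \<inter> M \<or> X = C - M" "X = C \<longrightarrow> (C \<inter> M = {} \<or> C \<subseteq> M)"
    unfolding Split_def by blast
  have "(x, y) \<in> P" using C X assms by (meson in_mono quotient_eq_iff)
  moreover have "x \<in> M \<longleftrightarrow> y \<in> M" using C X by blast
  ultimately show "(x, y) \<in> P \<and> (x \<in> M \<longleftrightarrow> y \<in> M)" by blast
next
  assume xy: "(x, y) \<in> P \<and> (x \<in> M \<longleftrightarrow> y \<in> M)"
  define C where "C = P `` {x}"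
  have "x \<in> Q" using xy assms unfolding equiv_def refl_on_def by blast
  then have C_block: "C \<in> Q // P" and x_C: "x \<in> C"
    unfolding C_def using assms by (auto intro: quotientI simp: equiv_def refl_on_def)
  have y_C: "y \<in> C" unfolding C_def using xy by blast
  show "(x, y) \<in> rel_of_partition (Split (Q // P) M)"
  proof (cases "C \<inter> M \<noteq> {} \<and> \<not> C \<subseteq> M")
    case True
    then have "C \<inter> M \<in> Split (Q // P) M" "C - M \<in> Split (Q // P) M"
      using C_block unfolding Split_def by blast+
    then show ?thesis using x_C y_C xy unfolding rel_of_partition_def by blast
  next
    case False
    then have "C \<in> Split (Q // P) M" using C_block unfolding Split_def by blast
    then show ?thesis using x_C y_C unfolding rel_of_partition_def by blast
  qed
qed

lemma rel_of_partition_Split_psubset: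
  assumes "equiv Q P" and "E \<in> Q // P"
    and "x \<in> E" "x \<in> M" and "y \<in> E" "y \<notin> M"
  shows "rel_of_partition (Split (Q // P) M) \<subset> P"
proof -
  note split_iff = rel_of_partition_Split_iff[OF assms(1)]
  have "(x, y) \<in> P" using assms by (meson quotient_eq_iff)
  moreover have "(x, y) \<notin> rel_of_partition (Split (Q // P) M)"
    using split_iff assms(4,6) by blast
  moreover have "rel_of_partition (Split (Q // P) M) \<subseteq> P"
    using split_iff by auto
  ultimately show ?thesis by blast
qed

lemma preimg_Image_eq_UN: "preimg T (R `` B) = (\<Union>b\<in>B. preimg T (R `` {b}))"
  unfolding preimg_def by blast

lemma block_stable_preimg_Image_iff:
  assumes "block_stable T R P''" and "(d, d') \<in> P''"
  shows "d \<in> preimg T (R `` B) \<longleftrightarrow> d' \<in> preimg T (R `` B)"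
  using assms(1)[unfolded block_stable_def, rule_format, OF assms(2)]
  unfolding preimg_Image_eq_UN[of T R B] by simp

lemma block_stable_subset_rel_of_partition_Split:
  assumes "equiv Q P" and "P'' \<subseteq> P" and "block_stable T R P''"
  shows "P'' \<subseteq> rel_of_partition (Split (Q // P) (preimg T (R `` B)))"
proof (rule subrelI)
  fix d d' assume dd': "(d, d') \<in> P''"
  then have "(d, d') \<in> P" using assms(2) by blast
  with block_stable_preimg_Image_iff[OF assms(3) dd']
  show "(d, d') \<in> rel_of_partition (Split (Q // P) (preimg T (R `` B)))"
    by (simp add: rel_of_partition_Split_iff[OF assms(1)])
qed

lemma set_trans_source_in_preimg:
  assumes "refl_on Q R" and "T \<subseteq> Q \<times> Q" and "set_trans T E B"
  obtains x where "x \<in> E" "x \<in> preimg T (R `` B)"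
proof -
  obtain x y where "x \<in> E" "y \<in> B" "(x, y) \<in> T"
    using assms(3) unfolding set_trans_def by blast
  moreover have "(y, y) \<in> R" using \<open>(x, y) \<in> T\<close> assms(1,2) unfolding refl_on_def by blast
  ultimately show ?thesis using that unfolding preimg_def by blast
qed

lemma RelCount_eq_0_rep_notin_preimg:
  assumes "finite Q" and "equiv Q P" and "T \<subseteq> Q \<times> Q"
    and "RelCount Q T rep P R E B = 0"
  shows "rep E \<notin> preimg T (R `` B)"
proof
  assume "rep E \<in> preimg T (R `` B)"
  then obtain z b where z: "(rep E, z) \<in> T" and "b \<in> B" "(b, z) \<in> R"
    unfolding preimg_def by blast
  have "z \<in> Q" using z assms(3) by blast
  then have block: "P `` {z} \<in> Q // P" and z_block: "z \<in> P `` {z}"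
    using assms(2) by (auto intro: quotientI simp: equiv_def refl_on_def)
  have "P `` {z} \<in> {E' \<in> Q // P. set_trans T {rep E} E' \<and> set_rel R B E'}"
    using block z_block z \<open>b \<in> B\<close> \<open>(b, z) \<in> R\<close>
    unfolding set_trans_def set_rel_def by blast
  moreover have "finite (Q // P)"
    using assms(1,2) by (simp add: finite_quotient equiv_def)
  ultimately show False using assms(4) unfolding RelCount_def by auto
qed

theorem lemma3:
  fixes Q :: "'a set" and T R P :: "('a \<times> 'a) set" and rep :: "'a set \<Rightarrow> 'a"
    and E B :: "'a set"
  assumes finQ: "finite Q"
    and T_on: "T \<subseteq> Q \<times> Q"
    and R_pre: "preorder_on Q R"
    and P_eq: "equiv Q P"
    and P_R: "P \<subseteq> R"
    and rep_in: "\<And>X. X \<in> Q // P \<Longrightarrow> rep X \<in> X"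
    and E_blk: "E \<in> Q // P"
    and B_blk: "\<exists>q\<in>Q. B = rblock R q"
    and E_to_B: "set_trans T E B"
    and cnt0: "RelCount Q T rep P R E B = 0"
  shows "rel_of_partition (Split (Q // P) (preimg T (R `` B))) \<subset> P
       \<and> (\<forall>P''. equiv Q P'' \<and> P'' \<subseteq> P \<and> block_stable T R P''
              \<longrightarrow> P'' \<subseteq> rel_of_partition (Split (Q // P) (preimg T (R `` B))))"
proof
  obtain x where "x \<in> E" "x \<in> preimg T (R `` B)"
    using R_pre T_on E_to_B set_trans_source_in_preimg unfolding preorder_on_def by metis
  moreover have "rep E \<in> E" using rep_in E_blk .
  moreover have "rep E \<notin> preimg T (R `` B)"
    using RelCount_eq_0_rep_notin_preimg[OF finQ P_eq T_on cnt0] .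
  ultimately show "rel_of_partition (Split (Q // P) (preimg T (R `` B))) \<subset> P"
    using rel_of_partition_Split_psubset[OF P_eq E_blk] by blast
  show "\<forall>P''. equiv Q P'' \<and> P'' \<subseteq> P \<and> block_stable T R P''
          \<longrightarrow> P'' \<subseteq> rel_of_partition (Split (Q // P) (preimg T (R `` B)))"
    using block_stable_subset_rel_of_partition_Split[OF P_eq] by simp
qed

end
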